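(* Let $(\mathfrak A,\alpha,\varphi)$ be a $C^*$-dynamical system with GNS covariant representation $(\mathcal H_\varphi,\pi_\varphi,U,\Phi)$, let $\omega$ be a state on $\mathfrak A$ (not necessarily $\alpha$-invariant, nor normal w.r.t. $\varphi$) with GNS representation $(\mathcal H_\omega,\pi_\omega,\Omega)$, and let $\mathfrak B\subset\mathfrak A$ be a $*$-subalgebra such that $\omega$ is generic for $(\mathfrak A,\alpha,\varphi)$ w.r.t. $\mathfrak B$. Let $E_1$ be the orthogonal projection onto the $U$-invariant vectors of $\mathcal H_\varphi$, and assume that $\{\pi_\varphi(B)\Phi: B\in\mathfrak B,\ \alpha(B)=B\}$ is dense in $E_1\mathcal H_\varphi$. Then there is a unique partial isometry $V:\mathcal H_\varphi\to\mathcal H_\omega$ with $V^*V=E_1$ and $V\pi_\varphi(B)\Phi=\pi_\omega(B)\Omega$ for every $B\in\mathfrak B$ with $\alpha(B)=B$; in particular $\|\pi_\omega(B)\Omega\|=\|\pi_\varphi(B)\Phi\|$ for all such $B$.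
   Context: A $C^*$-dynamical system $(\mathfrak A,\alpha,\varphi)$ consists of a $C^*$-algebra $\mathfrak A$, an automorphism $\alpha$ and an $\alpha$-invariant state $\varphi$; its GNS covariant representation is the GNS triple $(\mathcal H_\varphi,\pi_\varphi,\Phi)$ of $\varphi$ together with the unitary $U$ defined by $U\pi_\varphi(A)\Phi=\pi_\varphi(\alpha(A))\Phi$. A state $\omega$ on $\mathfrak A$ is generic for $(\mathfrak A,\alpha,\varphi)$ w.r.t. $\mathfrak B$ if $\lim_{N\to\infty}\frac1N\sum_{n=0}^{N-1}\omega(\alpha^n(B))=\varphi(B)$ for every $B\in\mathfrak B$. *)

theory Defs
  imports "HOL-Analysis.Analysis"
begin

class complex_vector = real_vector +
  fixes scaleC :: "complex \<Rightarrow> 'a \<Rightarrow> 'a"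
  assumes scaleC_add_right: "scaleC c (x + y) = scaleC c x + scaleC c y"
    and scaleC_add_left: "scaleC (c + d) x = scaleC c x + scaleC d x"
    and scaleC_scaleC: "scaleC c (scaleC d x) = scaleC (c * d) x"
    and scaleC_one: "scaleC 1 x = x"
    and scaleR_scaleC: "scaleR r x = scaleC (complex_of_real r) x"

class complex_normed_vector = complex_vector + real_normed_vector +
  assumes norm_scaleC: "norm (scaleC c x) = cmod c * norm x"

text \<open>Complex inner product, linear in the second and conjugate-linear in the first argument.\<close>
class complex_inner = complex_normed_vector +
  fixes cinner :: "'a \<Rightarrow> 'a \<Rightarrow> complex"
  assumes cinner_commute: "cinner x y = cnj (cinner y x)"
    and cinner_add_right: "cinner x (y + z) = cinner x y + cinner x z"
    and cinner_scaleC_right: "cinner x (scaleC c y) = c * cinner x y"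
    and cinner_self_nonneg: "Im (cinner x x) = 0 \<and> Re (cinner x x) \<ge> 0"
    and cinner_eq_zero_iff: "cinner x x = 0 \<longleftrightarrow> x = 0"
    and norm_eq_sqrt_cinner: "norm x = sqrt (Re (cinner x x))"

class chilbert_space = complex_inner + complete_space

text \<open>(Not necessarily unital) C*-algebras.\<close>
class cstar_algebra = complex_normed_vector + real_normed_algebra + complete_space +
  fixes cstar :: "'a \<Rightarrow> 'a"
  assumes cstar_cstar: "cstar (cstar x) = x"
    and cstar_add: "cstar (x + y) = cstar x + cstar y"
    and cstar_scaleC: "cstar (scaleC c x) = scaleC (cnj c) (cstar x)"
    and cstar_mult: "cstar (x * y) = cstar y * cstar x"
    and scaleC_mult_left: "scaleC c x * y = scaleC c (x * y)"
    and scaleC_mult_right: "x * scaleC c y = scaleC c (x * y)"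
    and cstar_identity: "norm (cstar x * x) = norm x * norm x"

definition clinear_fun :: "('a::complex_vector \<Rightarrow> 'b::complex_vector) \<Rightarrow> bool" where
  "clinear_fun f \<longleftrightarrow> (\<forall>x y. f (x + y) = f x + f y) \<and> (\<forall>c x. f (scaleC c x) = scaleC c (f x))"

definition clinear_functional :: "('a::complex_vector \<Rightarrow> complex) \<Rightarrow> bool" where
  "clinear_functional f \<longleftrightarrow> (\<forall>x y. f (x + y) = f x + f y) \<and> (\<forall>c x. f (scaleC c x) = c * f x)"

definition is_state :: "('a::cstar_algebra \<Rightarrow> complex) \<Rightarrow> bool" where
  "is_state \<omega> \<longleftrightarrow> clinear_functional \<omega>
     \<and> (\<forall>a. Im (\<omega> (cstar a * a)) = 0 \<and> Re (\<omega> (cstar a * a)) \<ge> 0)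
     \<and> (\<forall>a. cmod (\<omega> a) \<le> norm a)
     \<and> (\<forall>e>0. \<exists>a. norm a \<le> 1 \<and> cmod (\<omega> a) > 1 - e)"

definition is_automorphism :: "('a::cstar_algebra \<Rightarrow> 'a) \<Rightarrow> bool" where
  "is_automorphism \<alpha> \<longleftrightarrow> bij \<alpha> \<and> clinear_fun \<alpha>
     \<and> (\<forall>x y. \<alpha> (x * y) = \<alpha> x * \<alpha> y) \<and> (\<forall>x. \<alpha> (cstar x) = cstar (\<alpha> x))"

definition is_cstar_dynamical_system ::
  "('a::cstar_algebra \<Rightarrow> 'a) \<Rightarrow> ('a \<Rightarrow> complex) \<Rightarrow> bool" where
  "is_cstar_dynamical_system \<alpha> \<phi> \<longleftrightarrow>
     is_automorphism \<alpha> \<and> is_state \<phi> \<and> (\<forall>a. \<phi> (\<alpha> a) = \<phi> a)"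

definition is_star_subalgebra :: "'a::cstar_algebra set \<Rightarrow> bool" where
  "is_star_subalgebra B \<longleftrightarrow> 0 \<in> B
     \<and> (\<forall>x\<in>B. \<forall>y\<in>B. x + y \<in> B \<and> x * y \<in> B)
     \<and> (\<forall>c. \<forall>x\<in>B. scaleC c x \<in> B)
     \<and> (\<forall>x\<in>B. cstar x \<in> B)"

definition cbounded_linear :: "('h::complex_normed_vector \<Rightarrow> 'k::complex_normed_vector) \<Rightarrow> bool" where
  "cbounded_linear T \<longleftrightarrow> clinear_fun T \<and> (\<exists>K. \<forall>x. norm (T x) \<le> K * norm x)"

definition is_adjoint :: "('h::complex_inner \<Rightarrow> 'k::complex_inner) \<Rightarrow> ('k \<Rightarrow> 'h) \<Rightarrow> bool" where
  "is_adjoint T S \<longleftrightarrow> (\<forall>x y. cinner (S x) y = cinner x (T y))"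

definition is_unitary :: "('h::complex_inner \<Rightarrow> 'h) \<Rightarrow> bool" where
  "is_unitary U \<longleftrightarrow> cbounded_linear U \<and> surj U \<and> (\<forall>x y. cinner (U x) (U y) = cinner x y)"

definition is_orth_proj :: "('h::complex_inner \<Rightarrow> 'h) \<Rightarrow> 'h set \<Rightarrow> bool" where
  "is_orth_proj P M \<longleftrightarrow> (\<forall>x. P x \<in> M \<and> (\<forall>m\<in>M. cinner m (x - P x) = 0))"

definition partial_isometry :: "('h::complex_inner \<Rightarrow> 'k::complex_inner) \<Rightarrow> bool" where
  "partial_isometry V \<longleftrightarrow> cbounded_linear V
     \<and> (\<exists>W. is_adjoint V W \<and> (W \<circ> V) \<circ> (W \<circ> V) = W \<circ> V)"

definition is_representation :: "('a::cstar_algebra \<Rightarrow> 'h::chilbert_space \<Rightarrow> 'h) \<Rightarrow> bool" where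
  "is_representation \<pi> \<longleftrightarrow> (\<forall>a. cbounded_linear (\<pi> a))
     \<and> (\<forall>a b. \<pi> (a + b) = (\<lambda>x. \<pi> a x + \<pi> b x))
     \<and> (\<forall>c a. \<pi> (scaleC c a) = (\<lambda>x. scaleC c (\<pi> a x)))
     \<and> (\<forall>a b. \<pi> (a * b) = \<pi> a \<circ> \<pi> b)
     \<and> (\<forall>a. is_adjoint (\<pi> a) (\<pi> (cstar a)))"

text \<open>GNS representation \<open>(H, \<pi>, \<Omega>)\<close> of a state \<open>\<omega>\<close> (the Hilbert space is the type \<open>'h\<close>):
  a cyclic representation with cyclic vector \<open>\<Omega>\<close> such that \<open>\<omega>(A) = \<langle>\<Omega>, \<pi>(A)\<Omega>\<rangle>\<close>.\<close>
definition is_GNS :: "('a::cstar_algebra \<Rightarrow> complex) \<Rightarrow> ('a \<Rightarrow> 'h::chilbert_space \<Rightarrow> 'h) \<Rightarrow> 'h \<Rightarrow> bool" where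
  "is_GNS \<omega> \<pi> \<Omega> \<longleftrightarrow> is_representation \<pi>
     \<and> closure (range (\<lambda>a. \<pi> a \<Omega>)) = UNIV
     \<and> (\<forall>a. cinner \<Omega> (\<pi> a \<Omega>) = \<omega> a)"

definition is_GNS_covariant ::
  "('a::cstar_algebra \<Rightarrow> 'a) \<Rightarrow> ('a \<Rightarrow> complex) \<Rightarrow> ('a \<Rightarrow> 'h::chilbert_space \<Rightarrow> 'h) \<Rightarrow> ('h \<Rightarrow> 'h) \<Rightarrow> 'h \<Rightarrow> bool" where
  "is_GNS_covariant \<alpha> \<phi> \<pi> U \<Phi> \<longleftrightarrow> is_GNS \<phi> \<pi> \<Phi> \<and> is_unitary U
     \<and> (\<forall>a. U (\<pi> a \<Phi>) = \<pi> (\<alpha> a) \<Phi>)"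

definition generic :: "('a::cstar_algebra \<Rightarrow> complex) \<Rightarrow> ('a \<Rightarrow> 'a) \<Rightarrow> ('a \<Rightarrow> complex) \<Rightarrow> 'a set \<Rightarrow> bool" where
  "generic \<omega> \<alpha> \<phi> B \<longleftrightarrow> (\<forall>b\<in>B.
     (\<lambda>N. (\<Sum>n<N. \<omega> ((\<alpha> ^^ n) b)) / of_nat N) \<longlonglongrightarrow> \<phi> b)"

end

theory Submission
  imports Defs
begin

text \<open>
  For an \<open>\<alpha>\<close>-invariant \<open>b \<in> \<B>\<close> the ergodic averages of \<open>\<omega>(b)\<close> are constant, so genericity
  forces \<open>\<omega>(b) = \<phi>(b)\<close>. Applied to \<open>b\<^sup>* b\<close> this shows that \<open>\<pi>\<^sub>\<phi>(b)\<Phi> \<mapsto> \<pi>\<^sub>\<omega>(b)\<Omega>\<close>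
  is a well-defined linear isometry on the invariant vectors \<open>\<pi>\<^sub>\<phi>(b)\<Phi>\<close>. By the density
  hypothesis it extends to a linear isometry \<open>g\<close> on \<open>E\<^sub>1 H\<^sub>\<phi>\<close>, and \<open>V = g E\<^sub>1\<close> is a partial
  isometry with \<open>V\<^sup>* V = E\<^sub>1\<close>: its adjoint is \<open>g\<^sup>-\<^sup>1\<close> composed with the orthogonal projection
  onto the closed range of \<open>g\<close>. Conversely, any \<open>V\<close> with \<open>V\<^sup>* V = E\<^sub>1\<close> vanishes on \<open>ker E\<^sub>1\<close>,
  because \<open>\<parallel>V z\<parallel>\<^sup>2 = \<langle>V\<^sup>* V z, z\<rangle>\<close>, and is determined on \<open>E\<^sub>1 H\<^sub>\<phi>\<close> by continuity.
\<close>

subsection \<open>Complex linear maps and subspaces\<close>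

definition csubspace :: "'a::complex_vector set \<Rightarrow> bool" where
  "csubspace S \<longleftrightarrow> 0 \<in> S \<and> (\<forall>x\<in>S. \<forall>y\<in>S. x + y \<in> S) \<and> (\<forall>c. \<forall>x\<in>S. scaleC c x \<in> S)"

lemma scaleC_minus_one: "scaleC (-1) x = - (x::'a::complex_vector)"
  using scaleR_scaleC[of "-1" x] by simp

lemma diff_eq_add_scaleC_minus_one: "x - y = x + scaleC (-1) (y::'a::complex_vector)"
  by (simp add: scaleC_minus_one)

lemma scaleC_diff_right: "scaleC c (x - y) = scaleC c x - scaleC c (y::'a::complex_vector)"
  by (simp add: diff_eq_add_scaleC_minus_one scaleC_add_right scaleC_scaleC mult.commute)

lemma bounded_linear_scaleC: "bounded_linear (scaleC c :: 'a::complex_normed_vector \<Rightarrow> 'a)"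
  by (rule bounded_linear_intro[where K = "cmod c"])
    (simp_all add: scaleC_add_right scaleR_scaleC scaleC_scaleC mult.commute norm_scaleC)

lemma clinear_fun_diff: "clinear_fun f \<Longrightarrow> f (x - y) = f x - f y"
  unfolding clinear_fun_def diff_eq_add_scaleC_minus_one by simp

lemma clinear_fun_zero: "clinear_fun f \<Longrightarrow> f 0 = 0"
  using clinear_fun_diff[of f 0 0] by simp

lemma cbounded_linear_imp_bounded_linear:
  assumes "cbounded_linear T"
  shows "bounded_linear T"
proof -
  from assms obtain K where lin: "clinear_fun T" and K: "\<And>x. norm (T x) \<le> K * norm x"
    unfolding cbounded_linear_def by blast
  show ?thesis
  proof (rule bounded_linear_intro[where K = K])
    show "T (x + y) = T x + T y" for x y
      using lin unfolding clinear_fun_def by blast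
    show "T (scaleR r x) = scaleR r (T x)" for r x
      using lin unfolding clinear_fun_def by (simp add: scaleR_scaleC)
    show "norm (T x) \<le> norm x * K" for x
      using K[of x] by (simp add: mult.commute)
  qed
qed

lemma csubspace_diff: "csubspace S \<Longrightarrow> x \<in> S \<Longrightarrow> y \<in> S \<Longrightarrow> x - y \<in> S"
  unfolding csubspace_def diff_eq_add_scaleC_minus_one by blast

lemma csubspace_imp_subspace: "csubspace S \<Longrightarrow> subspace S"
  unfolding csubspace_def subspace_def by (simp add: scaleR_scaleC)

lemma csubspace_image:
  assumes f: "clinear_fun f" and S: "csubspace S"
  shows "csubspace (f ` S)"
  unfolding csubspace_def
proof (intro conjI ballI allI)
  show "0 \<in> f ` S"
    using S clinear_fun_zero[OF f] unfolding csubspace_def by force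
  show "x + y \<in> f ` S" if xy: "x \<in> f ` S" "y \<in> f ` S" for x y
  proof -
    obtain a b where ab: "a \<in> S" "b \<in> S" "x = f a" "y = f b"
      using xy by blast
    then have "x + y = f (a + b)"
      using f unfolding clinear_fun_def by simp
    then show ?thesis
      using S ab unfolding csubspace_def by blast
  qed
  show "scaleC c x \<in> f ` S" if x: "x \<in> f ` S" for c x
  proof -
    obtain a where a: "a \<in> S" "x = f a"
      using x by blast
    then have "scaleC c x = f (scaleC c a)"
      using f unfolding clinear_fun_def by simp
    then show ?thesis
      using S a unfolding csubspace_def by blast
  qed
qed

lemma csubspace_fixed_points: "clinear_fun f \<Longrightarrow> csubspace {x. f x = x}"
  using clinear_fun_zero[of f] unfolding csubspace_def clinear_fun_def by simp

lemma csubspace_closure: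
  fixes S :: "'a::complex_normed_vector set"
  assumes "csubspace S"
  shows "csubspace (closure S)"
proof -
  have sum: "(\<lambda>p. fst p + snd p) ` closure (S \<times> S) \<subseteq> closure S"
  proof (rule image_closure_subset)
    show "continuous_on (closure (S \<times> S)) (\<lambda>p. fst p + snd p)"
      by (intro continuous_intros)
    show "(\<lambda>p. fst p + snd p) ` (S \<times> S) \<subseteq> closure S"
      using assms unfolding csubspace_def by (auto intro!: closure_subset[THEN subsetD])
  qed simp
  have scale: "scaleC c ` closure S \<subseteq> closure S" for c
  proof (rule image_closure_subset)
    show "continuous_on (closure S) (scaleC c)"
      by (rule linear_continuous_on[OF bounded_linear_scaleC])
    show "scaleC c ` S \<subseteq> closure S"
      using assms unfolding csubspace_def by (auto intro!: closure_subset[THEN subsetD])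
  qed simp
  have "x + y \<in> closure S" if "x \<in> closure S" "y \<in> closure S" for x y
    using sum that unfolding closure_Times by force
  moreover have "scaleC c x \<in> closure S" if "x \<in> closure S" for c x
    using scale that by blast
  moreover have "0 \<in> closure S"
    using assms closure_subset unfolding csubspace_def by blast
  ultimately show ?thesis
    unfolding csubspace_def by blast
qed

subsection \<open>Complex inner products\<close>

lemma cinner_add_left: "cinner (x + y) (z::'a::complex_inner) = cinner x z + cinner y z"
  by (metis cinner_add_right cinner_commute complex_cnj_add)

lemma cinner_zero_right [simp]: "cinner x (0::'a::complex_inner) = 0"
  using cinner_add_right[of x 0 0] by simp

lemma cinner_zero_left [simp]: "cinner 0 (x::'a::complex_inner) = 0"
  using cinner_add_left[of 0 0 x] by simp

lemma cinner_diff_right: "cinner x (y - z) = cinner x y - cinner x (z::'a::complex_inner)"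
  by (simp add: diff_eq_add_scaleC_minus_one cinner_add_right cinner_scaleC_right)

lemma power2_norm_eq_cinner: "(norm (x::'a::complex_inner))\<^sup>2 = Re (cinner x x)"
  using norm_eq_sqrt_cinner[of x] cinner_self_nonneg[of x] by simp

lemma power2_norm_add:
  "(norm (x + y))\<^sup>2 = (norm x)\<^sup>2 + (norm y)\<^sup>2 + 2 * Re (cinner x (y::'a::complex_inner))"
  using cinner_commute[of y x]
  by (simp add: power2_norm_eq_cinner cinner_add_left cinner_add_right)

lemma power2_norm_diff:
  "(norm (x - y))\<^sup>2 = (norm x)\<^sup>2 + (norm y)\<^sup>2 - 2 * Re (cinner x (y::'a::complex_inner))"
  using power2_norm_add[of x "-y"] by (simp add: diff_eq_add_scaleC_minus_one cinner_scaleC_right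
      norm_scaleC flip: scaleC_minus_one)

lemma parallelogram_law:
  "(norm (x + y))\<^sup>2 + (norm (x - y))\<^sup>2 = 2 * (norm x)\<^sup>2 + 2 * (norm (y::'a::complex_inner))\<^sup>2"
  by (simp add: power2_norm_add power2_norm_diff)

lemma Im_cinner_eq_Re: "Im (cinner x y) = Re (cinner x (scaleC (-\<i>) (y::'a::complex_inner)))"
  by (simp add: cinner_scaleC_right)

lemma cinner_eq_zero_if_Re_zero:
  assumes "\<And>c. Re (cinner x (scaleC c y)) = 0"
  shows "cinner x (y::'a::complex_inner) = 0"
  using assms[of 1] assms[of "-\<i>"] by (simp add: complex_eq_iff cinner_scaleC_right scaleC_one)

subsection \<open>Orthogonal projections\<close>

lemma orth_proj_unique:
  assumes P: "is_orth_proj P M" and M: "csubspace M"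
    and p: "p \<in> M" and orth: "\<And>m. m \<in> M \<Longrightarrow> cinner m (x - p) = 0"
  shows "P x = p"
proof -
  have d: "p - P x \<in> M"
    using P M p csubspace_diff unfolding is_orth_proj_def by blast
  have "p - P x = (x - P x) - (x - p)"
    by simp
  then have "cinner (p - P x) (p - P x) = cinner (p - P x) (x - P x) - cinner (p - P x) (x - p)"
    by (metis cinner_diff_right)
  also have "\<dots> = 0"
    using P d orth[OF d] unfolding is_orth_proj_def by simp
  finally have "p - P x = 0"
    by (simp only: cinner_eq_zero_iff)
  then show ?thesis
    by simp
qed

lemma orth_proj_fixes: "is_orth_proj P M \<Longrightarrow> csubspace M \<Longrightarrow> m \<in> M \<Longrightarrow> P m = m"
  by (rule orth_proj_unique) simp_all

lemma orth_proj_in: "is_orth_proj P M \<Longrightarrow> P x \<in> M"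
  unfolding is_orth_proj_def by blast

lemma orth_proj_orthogonal: "is_orth_proj P M \<Longrightarrow> m \<in> M \<Longrightarrow> cinner m (x - P x) = 0"
  unfolding is_orth_proj_def by blast

lemma orth_proj_cinner_right:
  assumes "is_orth_proj P M" "m \<in> M"
  shows "cinner m (P x) = cinner m x"
  using orth_proj_orthogonal[OF assms, of x] by (simp add: cinner_diff_right)

lemma orth_proj_idem: "is_orth_proj P M \<Longrightarrow> csubspace M \<Longrightarrow> P (P x) = P x"
  by (simp add: orth_proj_fixes orth_proj_in)

lemma orth_proj_range:
  assumes "is_orth_proj P M" "csubspace M"
  shows "range P = M"
proof (intro subset_antisym subsetI)
  show "y \<in> M" if "y \<in> range P" for y
    using that orth_proj_in[OF assms(1)] by blast
  show "m \<in> range P" if "m \<in> M" for m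
    using orth_proj_fixes[OF assms that] by (metis rangeI)
qed

lemma orth_proj_clinear:
  assumes P: "is_orth_proj P M" and M: "csubspace M"
  shows "clinear_fun P"
  unfolding clinear_fun_def
proof (intro conjI allI)
  show "P (x + y) = P x + P y" for x y
  proof (rule orth_proj_unique[OF P M])
    show "P x + P y \<in> M"
      using M orth_proj_in[OF P] unfolding csubspace_def by blast
    show "cinner m (x + y - (P x + P y)) = 0" if "m \<in> M" for m
      using orth_proj_orthogonal[OF P that, of x] orth_proj_orthogonal[OF P that, of y]
      unfolding add_diff_add cinner_add_right by simp
  qed
  show "P (scaleC c x) = scaleC c (P x)" for c x
  proof (rule orth_proj_unique[OF P M])
    show "scaleC c (P x) \<in> M"
      using M orth_proj_in[OF P] unfolding csubspace_def by blast
    show "cinner m (scaleC c x - scaleC c (P x)) = 0" if "m \<in> M" for m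
      using orth_proj_orthogonal[OF P that, of x]
      by (simp add: cinner_scaleC_right flip: scaleC_diff_right)
  qed
qed

lemma orth_proj_residual: "is_orth_proj P M \<Longrightarrow> csubspace M \<Longrightarrow> P (x - P x) = 0"
  by (simp add: clinear_fun_diff orth_proj_clinear orth_proj_idem)

lemma orth_proj_norm_le:
  assumes P: "is_orth_proj P M"
  shows "norm (P x) \<le> norm x"
proof -
  have "(norm x)\<^sup>2 = (norm (P x + (x - P x)))\<^sup>2"
    by simp
  also have "\<dots> = (norm (P x))\<^sup>2 + (norm (x - P x))\<^sup>2"
    using orth_proj_orthogonal[OF P orth_proj_in[OF P]] by (simp only: power2_norm_add) simp
  finally have "(norm (P x))\<^sup>2 \<le> (norm x)\<^sup>2"
    by simp
  then show ?thesis
    by (rule power2_le_imp_le) simp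
qed

lemma linear_coeff_zero_if_quadratic_nonneg:
  fixes a b :: real
  assumes "\<And>t. 0 \<le> t\<^sup>2 * b - 2 * t * a"
  shows "a = 0"
proof -
  define k where "k = \<bar>b\<bar> + 1"
  have k: "k > 0" "b - 2 * k < 0"
    unfolding k_def by auto
  have "0 \<le> (a / k)\<^sup>2 * b - 2 * (a / k) * a"
    by (rule assms)
  also have "\<dots> = a\<^sup>2 * (b - 2 * k) / k\<^sup>2"
    using k by (simp add: field_simps power2_eq_square)
  finally have "0 \<le> a\<^sup>2 * (b - 2 * k)"
    using k by (simp add: zero_le_divide_iff)
  then have "a\<^sup>2 \<le> 0"
    using k by (auto simp: zero_le_mult_iff)
  then show ?thesis
    by simp
qed

lemma nearest_point_orthogonal:
  assumes N: "csubspace N" and p: "p \<in> N"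
    and nearest: "\<And>w. w \<in> N \<Longrightarrow> norm (x - p) \<le> norm (x - w)" and m: "m \<in> N"
  shows "cinner m (x - p) = 0"
proof -
  have Re_zero: "Re (cinner (x - p) n) = 0" if n: "n \<in> N" for n
  proof (rule linear_coeff_zero_if_quadratic_nonneg)
    fix t :: real
    have "p + scaleC (of_real t) n \<in> N"
      using N p n unfolding csubspace_def by blast
    then have "(norm (x - p))\<^sup>2 \<le> (norm (x - p - scaleC (of_real t) n))\<^sup>2"
      using nearest by (simp add: diff_diff_eq power_mono)
    also have "\<dots> = (norm (x - p))\<^sup>2 + t\<^sup>2 * (norm n)\<^sup>2 - 2 * t * Re (cinner (x - p) n)"
      by (simp add: power2_norm_diff cinner_scaleC_right norm_scaleC power_mult_distrib)
    finally show "0 \<le> t\<^sup>2 * (norm n)\<^sup>2 - 2 * t * Re (cinner (x - p) n)"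
      by simp
  qed
  have "cinner (x - p) m = 0"
    by (rule cinner_eq_zero_if_Re_zero) (use N m Re_zero in \<open>simp add: csubspace_def\<close>)
  then show ?thesis
    by (metis cinner_commute complex_cnj_zero)
qed

lemma apollonius_identity:
  fixes x a b :: "'a::complex_inner"
  shows "(norm (a - b))\<^sup>2
    = 2 * (norm (x - a))\<^sup>2 + 2 * (norm (x - b))\<^sup>2 - 4 * (norm (x - scaleR (1/2) (a + b)))\<^sup>2"
proof -
  have "(x - a) + (x - b) = scaleR 2 (x - scaleR (1/2) (a + b))"
    by (simp add: algebra_simps scaleR_2)
  moreover have "(x - a) - (x - b) = b - a"
    by simp
  ultimately show ?thesis
    using parallelogram_law[of "x - a" "x - b"]
    by (simp add: norm_minus_commute power_mult_distrib)
qed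

lemma minimizing_sequence_Cauchy:
  fixes a :: "nat \<Rightarrow> 'a::complex_inner"
  assumes N: "csubspace N" and a: "\<And>n. a n \<in> N"
    and d: "0 \<le> d" "\<And>w. w \<in> N \<Longrightarrow> d \<le> norm (x - w)"
    and close: "\<And>n. (norm (x - a n))\<^sup>2 < d\<^sup>2 + 1 / Suc n"
  shows "Cauchy a"
proof (rule CauchyI)
  have bound: "(norm (a n - a m))\<^sup>2 \<le> 2 / Suc n + 2 / Suc m" for n m
  proof -
    have "scaleR (1/2) (a n + a m) \<in> N"
      using N a unfolding csubspace_def scaleR_scaleC by blast
    then have "d\<^sup>2 \<le> (norm (x - scaleR (1/2) (a n + a m)))\<^sup>2"
      using d by (simp add: power_mono)
    then show ?thesis
      using apollonius_identity[of "a n" "a m" x] close[of n] close[of m] by linarith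
  qed
  fix r :: real
  assume r: "0 < r"
  obtain M :: nat where M: "4 / r\<^sup>2 < M"
    using reals_Archimedean2 by blast
  have "norm (a n - a m) < r" if "n \<ge> M" "m \<ge> M" for n m
  proof -
    have "2 / Suc n \<le> 2 / Suc M" "2 / Suc m \<le> 2 / Suc M"
      using that by (simp_all add: frac_le)
    then have "2 / Suc n + 2 / Suc m \<le> 4 / Suc M"
      by simp
    also have "\<dots> < r\<^sup>2"
      using M r by (simp add: field_simps) (smt (verit) zero_less_power)
    finally have "(norm (a n - a m))\<^sup>2 < r\<^sup>2"
      using bound[of n m] by linarith
    then show ?thesis
      using r by (simp add: power_less_imp_less_base)
  qed
  then show "\<exists>M. \<forall>n\<ge>M. \<forall>m\<ge>M. norm (a n - a m) < r"
    by blast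
qed

lemma power2_dist_infdist_approx:
  fixes x :: "'a::real_normed_vector"
  assumes "S \<noteq> {}" "0 < e"
  shows "\<exists>a\<in>S. (norm (x - a))\<^sup>2 < (infdist x S)\<^sup>2 + e"
proof -
  have "infdist x S < sqrt ((infdist x S)\<^sup>2 + e)"
    by (rule real_less_rsqrt) (simp add: assms(2))
  moreover have "bdd_below (dist x ` S)"
    by (rule bdd_belowI[of _ 0]) auto
  ultimately obtain a where a: "a \<in> S" "norm (x - a) < sqrt ((infdist x S)\<^sup>2 + e)"
    unfolding infdist_notempty[OF assms(1)] by (metis cINF_less_iff assms(1) dist_norm)
  then have "(norm (x - a))\<^sup>2 < (sqrt ((infdist x S)\<^sup>2 + e))\<^sup>2"
    by (intro power_strict_mono) auto
  with a(1) assms(2) show ?thesis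
    by auto
qed

lemma complete_csubspace_nearest_point:
  fixes N :: "'a::complex_inner set"
  assumes N: "csubspace N" "complete N"
  obtains p where "p \<in> N" "\<And>w. w \<in> N \<Longrightarrow> norm (x - p) \<le> norm (x - w)"
proof -
  define d where "d = infdist x N"
  have d: "0 \<le> d" "\<And>w. w \<in> N \<Longrightarrow> d \<le> norm (x - w)"
    unfolding d_def using infdist_le[of _ N x] by (simp_all add: infdist_nonneg dist_norm)
  have "N \<noteq> {}"
    using N(1) unfolding csubspace_def by blast
  then have "\<exists>a\<in>N. (norm (x - a))\<^sup>2 < d\<^sup>2 + 1 / Suc n" for n
    unfolding d_def by (rule power2_dist_infdist_approx) simp
  then have "\<exists>a. \<forall>n. a n \<in> N \<and> (norm (x - a n))\<^sup>2 < d\<^sup>2 + 1 / Suc n"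
    by (intro choice allI) blast
  then obtain a where a: "\<And>n. a n \<in> N" and close: "\<And>n. (norm (x - a n))\<^sup>2 < d\<^sup>2 + 1 / Suc n"
    by blast
  obtain p where p: "p \<in> N" and lim: "a \<longlonglongrightarrow> p"
    using N minimizing_sequence_Cauchy[OF N(1) a d close] a unfolding complete_def by blast
  have "(\<lambda>n. (norm (x - a n))\<^sup>2) \<longlonglongrightarrow> (norm (x - p))\<^sup>2"
    by (intro tendsto_intros lim)
  moreover have "(\<lambda>n. d\<^sup>2 + 1 / Suc n) \<longlonglongrightarrow> d\<^sup>2 + 0"
    using LIMSEQ_inverse_real_of_nat by (intro tendsto_intros) (simp add: inverse_eq_divide)
  ultimately have "(norm (x - p))\<^sup>2 \<le> d\<^sup>2 + 0"
    by (rule LIMSEQ_le) (use close in \<open>auto intro: less_imp_le\<close>)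
  then have "norm (x - p) \<le> d"
    using d(1) by (simp only: add_0_right) (rule power2_le_imp_le)
  show ?thesis
  proof (rule that[OF p])
    show "norm (x - p) \<le> norm (x - w)" if "w \<in> N" for w
      using \<open>norm (x - p) \<le> d\<close> d(2)[OF that] by linarith
  qed
qed

lemma complete_csubspace_orth_proj_exists:
  assumes "csubspace N" "complete N"
  shows "\<exists>P. is_orth_proj P N"
proof -
  have "\<exists>p. p \<in> N \<and> (\<forall>m\<in>N. cinner m (x - p) = 0)" for x
  proof -
    obtain p where "p \<in> N" "\<And>w. w \<in> N \<Longrightarrow> norm (x - p) \<le> norm (x - w)"
      using complete_csubspace_nearest_point[OF assms] by blast
    then show ?thesis
      using nearest_point_orthogonal[OF assms(1)] by blast
  qed
  then show ?thesis
    unfolding is_orth_proj_def by (intro choice allI)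
qed

subsection \<open>Linear isometries and partial isometries\<close>

definition clinear_isometry_on ::
  "'h::complex_normed_vector set \<Rightarrow> ('h \<Rightarrow> 'k::complex_normed_vector) \<Rightarrow> bool" where
  "clinear_isometry_on M g \<longleftrightarrow> (\<forall>x\<in>M. \<forall>y\<in>M. g (x + y) = g x + g y)
     \<and> (\<forall>c. \<forall>x\<in>M. g (scaleC c x) = scaleC c (g x)) \<and> (\<forall>x\<in>M. norm (g x) = norm x)"

lemma eq_on_closure_if_continuous_on:
  fixes f h :: "'a::topological_space \<Rightarrow> 'b::real_normed_vector"
  assumes "continuous_on (closure S) f" "continuous_on (closure S) h"
    and "\<And>x. x \<in> S \<Longrightarrow> f x = h x" and "x \<in> closure S"
  shows "f x = h x"
  using continuous_constant_on_closure[of S "\<lambda>x. f x - h x" 0 x] assms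
  by (simp add: continuous_on_diff)

lemma clinear_isometry_on_diff:
  assumes g: "clinear_isometry_on M g" and M: "csubspace M" and xy: "x \<in> M" "y \<in> M"
  shows "g (x - y) = g x - g y"
proof -
  have "scaleC (-1) y \<in> M"
    using M xy unfolding csubspace_def by blast
  then show ?thesis
    using g xy unfolding clinear_isometry_on_def diff_eq_add_scaleC_minus_one by simp
qed

lemma clinear_isometry_on_dist:
  assumes g: "clinear_isometry_on M g" and M: "csubspace M" and xy: "x \<in> M" "y \<in> M"
  shows "dist (g x) (g y) = dist x y"
proof -
  have "norm (g (x - y)) = norm (x - y)"
    using g csubspace_diff[OF M xy] unfolding clinear_isometry_on_def by blast
  then show ?thesis
    by (simp add: dist_norm clinear_isometry_on_diff[OF g M xy])
qed

lemma uniformly_continuous_on_if_dist_eq: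
  assumes "\<And>x y. x \<in> S \<Longrightarrow> y \<in> S \<Longrightarrow> dist (f x) (f y) = dist x y"
  shows "uniformly_continuous_on S f"
  unfolding uniformly_continuous_on_def
proof (intro allI impI)
  fix e :: real
  assume "0 < e"
  then show "\<exists>d>0. \<forall>x\<in>S. \<forall>x'\<in>S. dist x' x < d \<longrightarrow> dist (f x') (f x) < e"
    using assms by (intro exI[of _ e]) simp
qed

lemma clinear_isometry_on_inj:
  assumes "clinear_isometry_on M g" "csubspace M"
  shows "inj_on g M"
proof (rule inj_onI)
  fix x y
  assume "x \<in> M" "y \<in> M" "g x = g y"
  then have "dist x y = 0"
    using clinear_isometry_on_dist[OF assms, of x y] by simp
  then show "x = y"
    by simp
qed

lemma clinear_isometry_on_cinner:
  fixes g :: "'h::complex_inner \<Rightarrow> 'k::complex_inner"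
  assumes g: "clinear_isometry_on M g" and M: "csubspace M" and xy: "x \<in> M" "y \<in> M"
  shows "cinner (g x) (g y) = cinner x y"
proof -
  have Re_eq: "Re (cinner (g x) (g z)) = Re (cinner x z)" if z: "z \<in> M" for z
  proof -
    have "x + z \<in> M"
      using M xy(1) z unfolding csubspace_def by blast
    then have "g (x + z) = g x + g z" "norm (g (x + z)) = norm (x + z)"
      using g xy(1) z unfolding clinear_isometry_on_def by blast+
    then show ?thesis
      using g xy(1) z power2_norm_add[of x z] power2_norm_add[of "g x" "g z"]
      unfolding clinear_isometry_on_def by simp
  qed
  have iy: "scaleC (-\<i>) y \<in> M"
    using M xy unfolding csubspace_def by blast
  have "Im (cinner (g x) (g y)) = Re (cinner (g x) (scaleC (-\<i>) (g y)))"
    by (rule Im_cinner_eq_Re)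
  also have "\<dots> = Re (cinner (g x) (g (scaleC (-\<i>) y)))"
    using g xy(2) unfolding clinear_isometry_on_def by simp
  also have "\<dots> = Im (cinner x y)"
    using Re_eq[OF iy] by (simp add: Im_cinner_eq_Re)
  finally show ?thesis
    using Re_eq[OF xy(2)] by (simp add: complex_eq_iff)
qed

lemma additive_on_closure_if_continuous_on:
  fixes g :: "'a::complex_normed_vector \<Rightarrow> 'b::real_normed_vector"
  assumes S: "csubspace S" and g: "continuous_on (closure S) g"
    and add: "\<And>x y. x \<in> S \<Longrightarrow> y \<in> S \<Longrightarrow> g (x + y) = g x + g y"
    and xy: "x \<in> closure S" "y \<in> closure S"
  shows "g (x + y) = g x + g y"
proof -
  have "g (fst p + snd p) = g (fst p) + g (snd p)" if p: "p \<in> closure (S \<times> S)" for p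
  proof (rule eq_on_closure_if_continuous_on[OF _ _ _ p])
    have "continuous_on (closure (S \<times> S)) (\<lambda>p. fst p + snd p)"
      by (intro continuous_intros)
    moreover have "(\<lambda>p. fst p + snd p) ` closure (S \<times> S) \<subseteq> closure S"
      using csubspace_closure[OF S] unfolding closure_Times csubspace_def by auto
    ultimately show "continuous_on (closure (S \<times> S)) (\<lambda>p. g (fst p + snd p))"
      by (rule continuous_on_compose2[OF g])
    have "continuous_on (closure (S \<times> S)) (\<lambda>p. g (fst p))"
      by (rule continuous_on_compose2[OF g continuous_on_fst[OF continuous_on_id]])
        (auto simp: closure_Times)
    moreover have "continuous_on (closure (S \<times> S)) (\<lambda>p. g (snd p))"
      by (rule continuous_on_compose2[OF g continuous_on_snd[OF continuous_on_id]])
        (auto simp: closure_Times)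
    ultimately show "continuous_on (closure (S \<times> S)) (\<lambda>p. g (fst p) + g (snd p))"
      by (rule continuous_on_add)
  qed (use add in auto)
  then show ?thesis
    using xy unfolding closure_Times by force
qed

lemma scaleC_hom_on_closure_if_continuous_on:
  fixes g :: "'a::complex_normed_vector \<Rightarrow> 'b::complex_normed_vector"
  assumes S: "csubspace S" and g: "continuous_on (closure S) g"
    and scale: "\<And>x. x \<in> S \<Longrightarrow> g (scaleC c x) = scaleC c (g x)"
    and x: "x \<in> closure S"
  shows "g (scaleC c x) = scaleC c (g x)"
proof (rule eq_on_closure_if_continuous_on[OF _ _ scale x])
  show "continuous_on (closure S) (\<lambda>x. g (scaleC c x))"
    by (rule continuous_on_compose2[OF g linear_continuous_on[OF bounded_linear_scaleC]])
      (use csubspace_closure[OF S] in \<open>auto simp: csubspace_def\<close>)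
  show "continuous_on (closure S) (\<lambda>x. scaleC c (g x))"
    by (rule continuous_on_compose2[OF linear_continuous_on[OF bounded_linear_scaleC] g]) auto
qed

lemma continuous_extension_of_norm_preserving_map:
  fixes u :: "'a::complex_vector \<Rightarrow> 'h::complex_normed_vector"
    and v :: "'a \<Rightarrow> 'k::{complex_normed_vector, complete_space}"
  assumes u: "clinear_fun u" and v: "clinear_fun v" and F: "csubspace F"
    and norm_eq: "\<And>b. b \<in> F \<Longrightarrow> norm (v b) = norm (u b)"
  obtains g where "\<And>b. b \<in> F \<Longrightarrow> g (u b) = v b" "continuous_on (closure (u ` F)) g"
proof -
  have dist_eq: "dist (v b) (v c) = dist (u b) (u c)" if "b \<in> F" "c \<in> F" for b c
    using norm_eq[OF csubspace_diff[OF F that]] by (simp add: dist_norm clinear_fun_diff u v)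
  define f where "f x = v (SOME b. b \<in> F \<and> u b = x)" for x
  have f_u: "f (u b) = v b" if b: "b \<in> F" for b
  proof -
    define c where "c = (SOME c. c \<in> F \<and> u c = u b)"
    have c: "c \<in> F" "u c = u b"
      using someI[of "\<lambda>c. c \<in> F \<and> u c = u b" b] b unfolding c_def by auto
    then have "dist (v c) (v b) = 0"
      using dist_eq[OF c(1) b] by simp
    then show ?thesis
      unfolding f_def c_def[symmetric] by simp
  qed
  have "uniformly_continuous_on (u ` F) f"
    by (rule uniformly_continuous_on_if_dist_eq) (auto simp: dist_eq f_u)
  then obtain g where "uniformly_continuous_on (closure (u ` F)) g" "\<And>x. x \<in> u ` F \<Longrightarrow> f x = g x"
    by (rule uniformly_continuous_on_extension_on_closure) iprover
  then show ?thesis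
    using that f_u uniformly_continuous_imp_continuous by (metis imageI)
qed

lemma clinear_isometry_extension:
  fixes u :: "'a::complex_vector \<Rightarrow> 'h::complex_normed_vector"
    and v :: "'a \<Rightarrow> 'k::{complex_normed_vector, complete_space}"
  assumes u: "clinear_fun u" and v: "clinear_fun v" and F: "csubspace F"
    and norm_eq: "\<And>b. b \<in> F \<Longrightarrow> norm (v b) = norm (u b)"
  obtains g where "\<And>b. b \<in> F \<Longrightarrow> g (u b) = v b" "clinear_isometry_on (closure (u ` F)) g"
proof -
  obtain g where g_u: "\<And>b. b \<in> F \<Longrightarrow> g (u b) = v b" and g: "continuous_on (closure (u ` F)) g"
    using continuous_extension_of_norm_preserving_map[OF u v F] norm_eq by blast
  have D: "csubspace (u ` F)"
    by (rule csubspace_image[OF u F])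
  have "g (x + y) = g x + g y" if "x \<in> closure (u ` F)" "y \<in> closure (u ` F)" for x y
  proof (rule additive_on_closure_if_continuous_on[OF D g _ that])
    fix x' y'
    assume "x' \<in> u ` F" "y' \<in> u ` F"
    then obtain b c where bc: "b \<in> F" "c \<in> F" "x' = u b" "y' = u c"
      by blast
    then have "b + c \<in> F" "u b + u c = u (b + c)" "v b + v c = v (b + c)"
      using F u v unfolding csubspace_def clinear_fun_def by simp_all
    then show "g (x' + y') = g x' + g y'"
      using bc g_u by simp
  qed
  moreover have "g (scaleC c x) = scaleC c (g x)" if "x \<in> closure (u ` F)" for c x
  proof (rule scaleC_hom_on_closure_if_continuous_on[OF D g _ that])
    fix x'
    assume "x' \<in> u ` F"
    then obtain b where b: "b \<in> F" "x' = u b"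
      by blast
    then have "scaleC c b \<in> F" "scaleC c (u b) = u (scaleC c b)" "scaleC c (v b) = v (scaleC c b)"
      using F u v unfolding csubspace_def clinear_fun_def by simp_all
    then show "g (scaleC c x') = scaleC c (g x')"
      using b g_u by simp
  qed
  moreover have "norm (g x) = norm x" if "x \<in> closure (u ` F)" for x
    by (rule eq_on_closure_if_continuous_on[OF continuous_on_norm[OF g]
          continuous_on_norm[OF continuous_on_id] _ that])
      (use norm_eq g_u in auto)
  ultimately show ?thesis
    using that g_u unfolding clinear_isometry_on_def by blast
qed

lemma cbounded_linear_isometry_comp_orth_proj:
  assumes P: "is_orth_proj P M" and M: "csubspace M" and g: "clinear_isometry_on M g"
  shows "cbounded_linear (g \<circ> P)"
  unfolding cbounded_linear_def clinear_fun_def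
proof (intro conjI allI exI[of _ 1])
  have P_lin: "clinear_fun P"
    by (rule orth_proj_clinear[OF P M])
  show "(g \<circ> P) (x + y) = (g \<circ> P) x + (g \<circ> P) y" for x y
    using P_lin g orth_proj_in[OF P] unfolding clinear_fun_def clinear_isometry_on_def by simp
  show "(g \<circ> P) (scaleC c x) = scaleC c ((g \<circ> P) x)" for c x
    using P_lin g orth_proj_in[OF P] unfolding clinear_fun_def clinear_isometry_on_def by simp
  show "norm ((g \<circ> P) x) \<le> 1 * norm x" for x
    using g orth_proj_in[OF P] orth_proj_norm_le[OF P] unfolding clinear_isometry_on_def by simp
qed

lemma clinear_isometry_on_image_complete:
  fixes P :: "'h::chilbert_space \<Rightarrow> 'h" and g :: "'h \<Rightarrow> 'k::complex_inner"
  assumes P: "is_orth_proj P M" and M: "csubspace M" "closed M" and g: "clinear_isometry_on M g"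
  shows "csubspace (g ` M)" "complete (g ` M)"
proof -
  have V: "cbounded_linear (g \<circ> P)"
    by (rule cbounded_linear_isometry_comp_orth_proj[OF P M(1) g])
  have image_eq: "(g \<circ> P) ` M = g ` M"
    using orth_proj_fixes[OF P M(1)] by (auto simp: image_iff)
  show "csubspace (g ` M)"
    using V csubspace_image[OF _ M(1), of "g \<circ> P"] unfolding image_eq cbounded_linear_def by blast
  show "complete (g ` M)"
    unfolding image_eq[symmetric]
  proof (rule complete_isometric_image[of 1])
    show "subspace M" "bounded_linear (g \<circ> P)" "complete M"
      using csubspace_imp_subspace[OF M(1)] cbounded_linear_imp_bounded_linear[OF V] M(2)
      by (simp_all add: complete_eq_closed)
    show "\<forall>x\<in>M. 1 * norm x \<le> norm ((g \<circ> P) x)"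
      using g orth_proj_fixes[OF P M(1)] unfolding clinear_isometry_on_def by simp
  qed simp
qed

lemma isometry_comp_orth_proj_adjoint:
  fixes P :: "'h::chilbert_space \<Rightarrow> 'h" and g :: "'h \<Rightarrow> 'k::complex_inner"
  assumes P: "is_orth_proj P M" and M: "csubspace M" "closed M" and g: "clinear_isometry_on M g"
  shows "\<exists>W. is_adjoint (g \<circ> P) W \<and> W \<circ> (g \<circ> P) = P"
proof -
  note N = clinear_isometry_on_image_complete[OF P M g]
  obtain Q where Q: "is_orth_proj Q (g ` M)"
    using complete_csubspace_orth_proj_exists[OF N] by blast
  define W where "W = inv_into M g \<circ> Q"
  have W_in: "W y \<in> M" and g_W: "g (W y) = Q y" for y
    using orth_proj_in[OF Q] unfolding W_def by (simp_all add: inv_into_into f_inv_into_f)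
  have "cinner (W y) x = cinner y ((g \<circ> P) x)" for x y
  proof -
    have "g (P x) \<in> g ` M"
      using orth_proj_in[OF P] by blast
    then have "cinner (g (P x)) (Q y) = cinner (g (P x)) y"
      by (rule orth_proj_cinner_right[OF Q])
    then have "cinner (Q y) (g (P x)) = cinner y (g (P x))"
      by (metis cinner_commute)
    moreover have "cinner (W y) x = cinner (W y) (P x)"
      using orth_proj_cinner_right[OF P W_in] by simp
    ultimately show ?thesis
      using clinear_isometry_on_cinner[OF g M(1) W_in orth_proj_in[OF P]] g_W by simp
  qed
  moreover have "W ((g \<circ> P) x) = P x" for x
  proof -
    have "Q (g (P x)) = g (P x)"
      using orth_proj_fixes[OF Q N(1)] orth_proj_in[OF P] by blast
    then show ?thesis
      using clinear_isometry_on_inj[OF g M(1)] orth_proj_in[OF P] unfolding W_def by simp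
  qed
  ultimately have "is_adjoint (g \<circ> P) W" "W \<circ> (g \<circ> P) = P"
    unfolding is_adjoint_def by auto
  then show ?thesis
    by blast
qed

lemma isometry_comp_orth_proj_partial_isometry:
  fixes P :: "'h::chilbert_space \<Rightarrow> 'h" and g :: "'h \<Rightarrow> 'k::complex_inner"
  assumes P: "is_orth_proj P M" and M: "csubspace M" "closed M" and g: "clinear_isometry_on M g"
  shows "partial_isometry (g \<circ> P)"
proof -
  obtain W where "is_adjoint (g \<circ> P) W" "W \<circ> (g \<circ> P) = P"
    using isometry_comp_orth_proj_adjoint[OF P M g] by blast
  moreover have "P \<circ> P = P"
    using orth_proj_idem[OF P M(1)] by (simp add: fun_eq_iff)
  ultimately show ?thesis
    using cbounded_linear_isometry_comp_orth_proj[OF P M(1) g] unfolding partial_isometry_def by auto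
qed

lemma adjoint_comp_eq_orth_proj_kernel:
  assumes "is_adjoint V W" "W \<circ> V = P" "P z = 0"
  shows "V z = 0"
proof -
  have "cinner (V z) (V z) = cinner (W (V z)) z"
    using assms(1) unfolding is_adjoint_def by simp
  also have "W (V z) = 0"
    using assms(2,3) by (simp add: fun_eq_iff)
  finally have "cinner (V z) (V z) = 0"
    by simp
  then show ?thesis
    by (simp only: cinner_eq_zero_iff)
qed

lemma adjoint_comp_eq_orth_proj_unique:
  assumes P: "is_orth_proj P M" "csubspace M" and dense: "M \<subseteq> closure D"
    and V1: "cbounded_linear V1" "is_adjoint V1 W1" "W1 \<circ> V1 = P"
    and V2: "cbounded_linear V2" "is_adjoint V2 W2" "W2 \<circ> V2 = P"
    and eq: "\<And>x. x \<in> D \<Longrightarrow> V1 x = V2 x"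
  shows "V1 = V2"
proof
  fix x
  have split: "V x = V (P x) + V (x - P x)" if "cbounded_linear V" for V
    using that unfolding cbounded_linear_def by (simp add: clinear_fun_diff)
  have "V1 (P x) = V2 (P x)"
  proof (rule eq_on_closure_if_continuous_on[of D])
    show "continuous_on (closure D) V1" "continuous_on (closure D) V2"
      using V1(1) V2(1) by (simp_all add: linear_continuous_on cbounded_linear_imp_bounded_linear)
    show "P x \<in> closure D"
      using dense orth_proj_in[OF P(1)] by blast
  qed (rule eq)
  moreover have "V1 (x - P x) = 0"
    by (rule adjoint_comp_eq_orth_proj_kernel[OF V1(2,3) orth_proj_residual[OF P]])
  moreover have "V2 (x - P x) = 0"
    by (rule adjoint_comp_eq_orth_proj_kernel[OF V2(2,3) orth_proj_residual[OF P]])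
  ultimately show "V1 x = V2 x"
    using split[OF V1(1)] split[OF V2(1)] by simp
qed

lemma partial_isometry_extension_unique:
  fixes u :: "'a::complex_vector \<Rightarrow> 'h::chilbert_space" and v :: "'a \<Rightarrow> 'k::chilbert_space"
  assumes u: "clinear_fun u" and v: "clinear_fun v" and F: "csubspace F"
    and norm_eq: "\<And>b. b \<in> F \<Longrightarrow> norm (v b) = norm (u b)"
    and P: "is_orth_proj P M" "csubspace M" and dense: "closure (u ` F) = M"
  shows "\<exists>!V. partial_isometry V \<and> (\<exists>W. is_adjoint V W \<and> W \<circ> V = P) \<and> (\<forall>b\<in>F. V (u b) = v b)"
proof -
  obtain g where g_u: "\<And>b. b \<in> F \<Longrightarrow> g (u b) = v b" and g: "clinear_isometry_on M g"
    using clinear_isometry_extension[OF u v F] norm_eq unfolding dense by blast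
  have "closed M"
    unfolding dense[symmetric] by simp
  obtain W where W: "is_adjoint (g \<circ> P) W" "W \<circ> (g \<circ> P) = P"
    using isometry_comp_orth_proj_adjoint[OF P \<open>closed M\<close> g] by blast
  have V_u: "(g \<circ> P) (u b) = v b" if "b \<in> F" for b
  proof -
    have "u b \<in> M"
      using that closure_subset[of "u ` F"] unfolding dense by blast
    then show ?thesis
      using g_u[OF that] orth_proj_fixes[OF P] by simp
  qed
  show ?thesis
  proof (rule ex1I[of _ "g \<circ> P"])
    show "partial_isometry (g \<circ> P) \<and> (\<exists>W. is_adjoint (g \<circ> P) W \<and> W \<circ> (g \<circ> P) = P)
        \<and> (\<forall>b\<in>F. (g \<circ> P) (u b) = v b)"
      using isometry_comp_orth_proj_partial_isometry[OF P \<open>closed M\<close> g] W V_u by blast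
    fix V
    assume "partial_isometry V \<and> (\<exists>W. is_adjoint V W \<and> W \<circ> V = P) \<and> (\<forall>b\<in>F. V (u b) = v b)"
    then obtain W' where V: "cbounded_linear V" "is_adjoint V W'" "W' \<circ> V = P"
      and V_u': "\<forall>b\<in>F. V (u b) = v b"
      unfolding partial_isometry_def by blast
    show "V = g \<circ> P"
    proof (rule adjoint_comp_eq_orth_proj_unique[OF P _ V
          cbounded_linear_isometry_comp_orth_proj[OF P g] W])
      show "M \<subseteq> closure (u ` F)"
        by (simp add: dense)
      show "V x = (g \<circ> P) x" if "x \<in> u ` F" for x
        using that V_u V_u' by auto
    qed
  qed
qed

subsection \<open>GNS representations and ergodic averages\<close>

lemma is_star_subalgebra_imp_csubspace: "is_star_subalgebra B \<Longrightarrow> csubspace B"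
  unfolding is_star_subalgebra_def csubspace_def by blast

lemma is_star_subalgebra_fixed_points:
  assumes "is_automorphism \<alpha>" "is_star_subalgebra B"
  shows "is_star_subalgebra {b \<in> B. \<alpha> b = b}"
  using assms clinear_fun_zero[of \<alpha>]
  unfolding is_automorphism_def is_star_subalgebra_def clinear_fun_def by auto

lemma generic_fixed_point_eq:
  assumes "generic \<omega> \<alpha> \<phi> B" "b \<in> B" "\<alpha> b = b"
  shows "\<omega> b = \<phi> b"
proof -
  have "(\<alpha> ^^ n) b = b" for n
    using assms(3) by (induction n) simp_all
  then have "\<forall>\<^sub>F N in sequentially. (\<Sum>n<N. \<omega> ((\<alpha> ^^ n) b)) / of_nat N = \<omega> b"
    by (intro eventually_sequentiallyI[of 1]) simp
  then have "(\<lambda>N. (\<Sum>n<N. \<omega> ((\<alpha> ^^ n) b)) / of_nat N) \<longlonglongrightarrow> \<omega> b"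
    by (rule tendsto_eventually)
  moreover have "(\<lambda>N. (\<Sum>n<N. \<omega> ((\<alpha> ^^ n) b)) / of_nat N) \<longlonglongrightarrow> \<phi> b"
    using assms(1,2) unfolding generic_def by blast
  ultimately show ?thesis
    by (rule LIMSEQ_unique)
qed

lemma representation_apply_clinear: "is_representation \<pi> \<Longrightarrow> clinear_fun (\<lambda>a. \<pi> a x)"
  unfolding is_representation_def clinear_fun_def by simp

lemma GNS_cinner_apply:
  assumes "is_GNS \<omega> \<pi> \<Omega>"
  shows "cinner (\<pi> a \<Omega>) (\<pi> b \<Omega>) = \<omega> (cstar a * b)"
proof -
  have rep: "is_representation \<pi>"
    using assms unfolding is_GNS_def by blast
  then have "is_adjoint (\<pi> (cstar a)) (\<pi> a)"
    unfolding is_representation_def by (metis cstar_cstar)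
  then have "cinner (\<pi> a \<Omega>) (\<pi> b \<Omega>) = cinner \<Omega> (\<pi> (cstar a) (\<pi> b \<Omega>))"
    unfolding is_adjoint_def by blast
  also have "\<dots> = cinner \<Omega> (\<pi> (cstar a * b) \<Omega>)"
    using rep unfolding is_representation_def by simp
  also have "\<dots> = \<omega> (cstar a * b)"
    using assms unfolding is_GNS_def by blast
  finally show ?thesis .
qed

lemma GNS_norm_eq:
  assumes "is_GNS \<omega> \<pi>\<omega> \<Omega>" "is_GNS \<phi> \<pi>\<phi> \<Phi>" "\<omega> (cstar b * b) = \<phi> (cstar b * b)"
  shows "norm (\<pi>\<omega> b \<Omega>) = norm (\<pi>\<phi> b \<Phi>)"
  using assms by (simp add: norm_eq_sqrt_cinner GNS_cinner_apply)

lemma generic_GNS_norm_eq: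
  assumes "generic \<omega> \<alpha> \<phi> B" "is_automorphism \<alpha>" "is_star_subalgebra B"
    and "is_GNS \<omega> \<pi>\<omega> \<Omega>" "is_GNS \<phi> \<pi>\<phi> \<Phi>" and "b \<in> B" "\<alpha> b = b"
  shows "norm (\<pi>\<omega> b \<Omega>) = norm (\<pi>\<phi> b \<Phi>)"
proof (rule GNS_norm_eq[OF assms(4,5)])
  have "cstar b * b \<in> {b \<in> B. \<alpha> b = b}"
    using is_star_subalgebra_fixed_points[OF assms(2,3)] assms(6,7)
    unfolding is_star_subalgebra_def by blast
  then show "\<omega> (cstar b * b) = \<phi> (cstar b * b)"
    using generic_fixed_point_eq[OF assms(1)] by blast
qed

theorem lemma4p2:
  fixes \<alpha> :: "'a::cstar_algebra \<Rightarrow> 'a"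
    and \<phi> \<omega> :: "'a \<Rightarrow> complex"
    and \<pi>\<phi> :: "'a \<Rightarrow> 'h::chilbert_space \<Rightarrow> 'h" and U :: "'h \<Rightarrow> 'h" and \<Phi> :: 'h
    and \<pi>\<omega> :: "'a \<Rightarrow> 'k::chilbert_space \<Rightarrow> 'k" and \<Omega> :: 'k
    and \<B> :: "'a set"
    and E1 :: "'h \<Rightarrow> 'h"
  assumes "is_cstar_dynamical_system \<alpha> \<phi>"
    and "is_GNS_covariant \<alpha> \<phi> \<pi>\<phi> U \<Phi>"
    and "is_state \<omega>"
    and "is_GNS \<omega> \<pi>\<omega> \<Omega>"
    and "is_star_subalgebra \<B>"
    and "generic \<omega> \<alpha> \<phi> \<B>"
    and "is_orth_proj E1 {x. U x = x}"
    and "closure {\<pi>\<phi> b \<Phi> | b. b \<in> \<B> \<and> \<alpha> b = b} = range E1"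
  shows "(\<exists>!V :: 'h \<Rightarrow> 'k. partial_isometry V
            \<and> (\<exists>W. is_adjoint V W \<and> W \<circ> V = E1)
            \<and> (\<forall>b\<in>\<B>. \<alpha> b = b \<longrightarrow> V (\<pi>\<phi> b \<Phi>) = \<pi>\<omega> b \<Omega>))
         \<and> (\<forall>b\<in>\<B>. \<alpha> b = b \<longrightarrow> norm (\<pi>\<omega> b \<Omega>) = norm (\<pi>\<phi> b \<Phi>))"
proof -
  define F where "F = {b \<in> \<B>. \<alpha> b = b}"
  have ball_F: "(\<forall>b\<in>F. Q b) \<longleftrightarrow> (\<forall>b\<in>\<B>. \<alpha> b = b \<longrightarrow> Q b)" for Q
    unfolding F_def by blast
  have aut: "is_automorphism \<alpha>" and GNS\<phi>: "is_GNS \<phi> \<pi>\<phi> \<Phi>" and U: "is_unitary U"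
    using assms(1,2) unfolding is_cstar_dynamical_system_def is_GNS_covariant_def by auto
  have F: "csubspace F"
    unfolding F_def
    by (intro is_star_subalgebra_imp_csubspace is_star_subalgebra_fixed_points aut assms(5))
  have norm_eq: "\<forall>b\<in>F. norm (\<pi>\<omega> b \<Omega>) = norm (\<pi>\<phi> b \<Phi>)"
    unfolding ball_F using generic_GNS_norm_eq[OF assms(6) aut assms(5,4) GNS\<phi>] by blast
  have M: "csubspace {x. U x = x}"
    using U csubspace_fixed_points unfolding is_unitary_def cbounded_linear_def by blast
  have dense: "closure ((\<lambda>b. \<pi>\<phi> b \<Phi>) ` F) = {x. U x = x}"
    using assms(8) orth_proj_range[OF assms(7) M] unfolding F_def by (simp add: setcompr_eq_image)
  have u: "clinear_fun (\<lambda>b. \<pi>\<phi> b \<Phi>)" and v: "clinear_fun (\<lambda>b. \<pi>\<omega> b \<Omega>)"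
    using GNS\<phi> assms(4) representation_apply_clinear unfolding is_GNS_def by blast+
  have "\<exists>!V. partial_isometry V \<and> (\<exists>W. is_adjoint V W \<and> W \<circ> V = E1)
      \<and> (\<forall>b\<in>F. V (\<pi>\<phi> b \<Phi>) = \<pi>\<omega> b \<Omega>)"
    by (rule partial_isometry_extension_unique[OF u v F _ assms(7) M dense]) (use norm_eq in blast)
  with norm_eq show ?thesis
    unfolding ball_F by (rule conjI[rotated])
qed

end
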